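(* Let $c\in\mathbb{C}$ and $\alpha,\bar\alpha,\beta,\bar\beta\in\mathbb{C}$ with $\alpha,\bar\alpha\neq0$, $\beta\neq\bar\beta$ and $\beta-\bar\beta+c=0$. Consider $TSV(c)$-module extensions $0\to M_{\bar\alpha,\bar\beta}\to E\to M_{\alpha,\beta}\to0$ written as $E=\mathbb{C}[\partial]v_{\bar\alpha}\oplus\mathbb{C}[\partial]v_\alpha$ with $L_\lambda v_\alpha=(\partial+\alpha\lambda+\beta)v_\alpha+f(\partial,\lambda)v_{\bar\alpha}$, $Y_\lambda v_\alpha=g(\partial,\lambda)v_{\bar\alpha}$, $M_\lambda v_\alpha=h(\partial,\lambda)v_{\bar\alpha}$. Then $h=0$, every such extension is equivalent to one with $f=0$, and an extension with $f=h=0$ is nontrivial iff $g\neq0$. The nonzero $g$ that occur (with $f=h=0$) are exactly the nonzero scalar multiples of the following, under the stated conditions ($m$ = total degree of $g$): (a) $m=0$: $\alpha-\bar\alpha=-\frac12$, $g=1$; (b) $m=1$: $\alpha-\bar\alpha=\frac12$, $g=\partial+2\bar\alpha\lambda-2\bar\alpha c+\bar\beta$; (c) $m=2$: $\alpha=1$, $\bar\alpha=-\frac12$, $g=\partial^2+2(1+2\bar\alpha)\partial\lambda+2\bar\alpha\lambda^2+a_{10}\partial+a_{11}\lambda+a_{00}$ with $a_{10}=2\bar\beta-2(1+2\bar\alpha)c$, $a_{11}=-4c\bar\alpha+2(1+2\bar\alpha)\bar\beta$, $a_{00}=\bar\beta^2-2c\bar\beta(1+2\bar\alpha)+2c^2\bar\alpha$;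 and no other degrees occur.
   Context: A conformal module over a Lie conformal algebra $\mathcal{R}$ is a $\mathbb{C}[\partial]$-module $V$ with $\mathbb{C}$-linear maps $a\otimes v\mapsto a_\lambda v\in V[\lambda]$ such that $(\partial a)_\lambda v=-\lambda a_\lambda v$, $a_\lambda(\partial v)=(\partial+\lambda)a_\lambda v$, and $a_\lambda(b_\mu v)-b_\mu(a_\lambda v)=[a_\lambda b]_{\lambda+\mu}v$. $TSV(c)$ ($c\in\mathbb{C}$) is the free $\mathbb{C}[\partial]$-module on $L,Y,M$ with $[L_\lambda L]=(\partial+2\lambda)L$, $[L_\lambda Y]=(\partial+\frac32\lambda+c)Y$, $[L_\lambda M]=(\partial+2c)M$, $[Y_\lambda Y]=(\partial+2\lambda)(-\partial-2c)M$, $[Y_\lambda M]=[M_\lambda M]=0$. For $\alpha\neq0$, $M_{\alpha,\beta}=\mathbb{C}[\partial]v$ has $L_\lambda v=(\partial+\alpha\lambda+\beta)v$, $Y_\lambda v=M_\lambda v=0$. In $E$, $\mathbb{C}[\partial]v_{\bar\alpha}$ is a submodule isomorphic to $M_{\bar\alpha,\bar\beta}$. Equivalence of extensions means a module homomorphism between middle terms compatible with the identities on the end terms; trivial means equivalent to the direct sum extension. *)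

theory Defs
  imports "HOL-Computational_Algebra.Polynomial"
begin

datatype gen = GL | GY | GM

definition gens :: "gen list" where "gens = [GL, GY, GM]"

(* An element of TSV(c) = C[d]L + C[d]Y + C[d]M : its three coefficient polynomials in d. *)
type_synonym relt = "gen \<Rightarrow> complex poly"

(* An element p(d) vbar + q(d) v of E = C[d]vbar + C[d]v, represented as (p, q). *)
type_synonym melt = "complex poly \<times> complex poly"

(* Two-variable polynomials F(d, lambda): outer variable lambda, coefficients in C[d]. *)
type_synonym poly2 = "complex poly poly"

definition Dv :: poly2 where "Dv = [:[:0, 1:]:]"
definition Lv :: poly2 where "Lv = [:0, 1:]"
definition Cst :: "complex \<Rightarrow> poly2" where "Cst a = [:[:a:]:]"

definition at_lam :: "poly2 \<Rightarrow> complex \<Rightarrow> complex poly" where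
  "at_lam F l = poly F [:l:]"

definition eadd :: "melt \<Rightarrow> melt \<Rightarrow> melt" where
  "eadd x y = (fst x + fst y, snd x + snd y)"
definition esub :: "melt \<Rightarrow> melt \<Rightarrow> melt" where
  "esub x y = (fst x - fst y, snd x - snd y)"
definition escal :: "complex poly \<Rightarrow> melt \<Rightarrow> melt" where
  "escal r x = (r * fst x, r * snd x)"
definition ezero :: melt where "ezero = (0, 0)"
definition esum :: "melt list \<Rightarrow> melt" where "esum xs = foldr eadd xs ezero"

definition radd :: "relt \<Rightarrow> relt \<Rightarrow> relt" where "radd x y = (\<lambda>A. x A + y A)"
definition rzero :: relt where "rzero = (\<lambda>A. 0)"
definition rsum :: "relt list \<Rightarrow> relt" where "rsum xs = foldr radd xs rzero"
definition rscal :: "complex poly \<Rightarrow> relt \<Rightarrow> relt" where "rscal r x = (\<lambda>A. r * x A)"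
definition rgen :: "complex poly \<Rightarrow> gen \<Rightarrow> relt" where
  "rgen p B = (\<lambda>A. if A = B then p else 0)"

(* lambda-brackets of generators, [A_l B]; the ones with A after B are obtained
   from the given ones by skew-symmetry [b_l a] = -[a_{-l-d} b]. *)
fun gbr :: "complex \<Rightarrow> gen \<Rightarrow> gen \<Rightarrow> complex \<Rightarrow> relt" where
  "gbr c GL GL l = rgen [:2*l, 1:] GL"
| "gbr c GL GY l = rgen [:3/2*l + c, 1:] GY"
| "gbr c GL GM l = rgen [:2*c, 1:] GM"
| "gbr c GY GL l = rgen [:3/2*l - c, 1/2:] GY"
| "gbr c GM GL l = rgen [:-2*c, -1:] GM"
| "gbr c GY GY l = rgen ([:2*l, 1:] * [:-2*c, -1:]) GM"
| "gbr c GY GM l = rzero"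
| "gbr c GM GY l = rzero"
| "gbr c GM GM l = rzero"

(* sesquilinear extension: [(p A)_l (q B)] = p(-l) q(d+l) [A_l B] *)
definition rbr :: "complex \<Rightarrow> relt \<Rightarrow> relt \<Rightarrow> complex \<Rightarrow> relt" where
  "rbr c x y l = rsum (concat (map (\<lambda>A. map (\<lambda>B.
      rscal (smult (poly (x A) (-l)) (pcompose (y B) [:l, 1:])) (gbr c A B l)) gens) gens))"

fun act_vbar :: "complex \<Rightarrow> complex \<Rightarrow> gen \<Rightarrow> complex \<Rightarrow> melt" where
  "act_vbar a' b' GL l = ([:a' * l + b', 1:], 0)"
| "act_vbar a' b' GY l = ezero"
| "act_vbar a' b' GM l = ezero"

fun act_v :: "complex \<Rightarrow> complex \<Rightarrow> poly2 \<Rightarrow> poly2 \<Rightarrow> poly2 \<Rightarrow> gen \<Rightarrow> complex \<Rightarrow> melt" where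
  "act_v a b f g h GL l = (at_lam f l, [:a * l + b, 1:])"
| "act_v a b f g h GY l = (at_lam g l, 0)"
| "act_v a b f g h GM l = (at_lam h l, 0)"

(* full action, extended by the conformal-module rules:
   A_l (p(d) vbar + q(d) v) = p(d+l) A_l vbar + q(d+l) A_l v,  (r(d) A)_l e = r(-l) A_l e.
   The lambda-polynomial a_l e is represented by its values at all l. *)
definition act :: "complex \<Rightarrow> complex \<Rightarrow> complex \<Rightarrow> complex \<Rightarrow> poly2 \<Rightarrow> poly2 \<Rightarrow> poly2
    \<Rightarrow> relt \<Rightarrow> complex \<Rightarrow> melt \<Rightarrow> melt" where
  "act a b a' b' f g h x l e = esum (map (\<lambda>A. escal [:poly (x A) (-l):]
      (eadd (escal (pcompose (fst e) [:l, 1:]) (act_vbar a' b' A l))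
            (escal (pcompose (snd e) [:l, 1:]) (act_v a b f g h A l)))) gens)"

definition dR :: "relt \<Rightarrow> relt" where "dR x = rscal [:0, 1:] x"
definition dE :: "melt \<Rightarrow> melt" where "dE e = escal [:0, 1:] e"

(* E (with data c, a=alpha, b=beta, a'=alphabar, b'=betabar, f, g, h) is a conformal
   TSV(c)-module; polynomial identities in lambda, mu are stated for all complex values. *)
definition is_module :: "complex \<Rightarrow> complex \<Rightarrow> complex \<Rightarrow> complex \<Rightarrow> complex
    \<Rightarrow> poly2 \<Rightarrow> poly2 \<Rightarrow> poly2 \<Rightarrow> bool" where
  "is_module c a b a' b' f g h \<longleftrightarrow>
     (\<forall>x l e. act a b a' b' f g h (dR x) l e = escal [:-l:] (act a b a' b' f g h x l e)) \<and>
     (\<forall>x l e. act a b a' b' f g h x l (dE e) = escal [:l, 1:] (act a b a' b' f g h x l e)) \<and>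
     (\<forall>x y e l m. esub (act a b a' b' f g h x l (act a b a' b' f g h y m e))
                        (act a b a' b' f g h y m (act a b a' b' f g h x l e))
                  = act a b a' b' f g h (rbr c x y l) (l + m) e)"

definition ext_equiv :: "complex \<Rightarrow> complex \<Rightarrow> complex \<Rightarrow> complex \<Rightarrow> complex
    \<Rightarrow> poly2 \<times> poly2 \<times> poly2 \<Rightarrow> poly2 \<times> poly2 \<times> poly2 \<Rightarrow> bool" where
  "ext_equiv c a b a' b' P1 P2 \<longleftrightarrow>
    (case P1 of (f1, g1, h1) \<Rightarrow> case P2 of (f2, g2, h2) \<Rightarrow>
     (\<exists>\<phi> :: melt \<Rightarrow> melt.
        (\<forall>x y. \<phi> (eadd x y) = eadd (\<phi> x) (\<phi> y)) \<and>
        (\<forall>r x. \<phi> (escal r x) = escal r (\<phi> x)) \<and>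
        (\<forall>p. \<phi> (p, 0) = (p, 0)) \<and>
        (\<forall>x. snd (\<phi> x) = snd x) \<and>
        (\<forall>x l e. \<phi> (act a b a' b' f1 g1 h1 x l e) = act a b a' b' f2 g2 h2 x l (\<phi> e))))"

end

theory Submission
  imports Defs
begin

text \<open>Evaluating the Jacobi identities on the generator \<open>v\<close> turns the module axioms into
  functional equations for \<open>f, g, h\<close>. The \<open>[L\<^sub>\<lambda> M]\<close> identity at \<open>\<lambda> = 0\<close> gives
  \<open>c h = 0\<close>, and \<open>c = \<beta>' - \<beta> \<noteq> 0\<close>. The \<open>[L\<^sub>\<lambda> L]\<close> identity exhibits \<open>f\<close> as a
  coboundary, which a change of lift of \<open>v\<close> removes. With \<open>f = h = 0\<close> the module axioms
  reduce to the single \<open>[L\<^sub>\<lambda> Y]\<close> identity for \<open>g\<close>.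

  Setting \<open>\<mu> = 0\<close> in that identity shows that \<open>g\<close> is determined by \<open>g(\<partial>, 0)\<close>, and at
  \<open>\<lambda> = -2c\<close> it becomes the difference equation
  \<open>(\<partial> - r) g(\<partial> - 2c, 0) = (\<partial> - r - 2c\<nu>) g(\<partial>, 0)\<close> with \<open>r = 2c\<alpha>' - \<beta>'\<close>,
  \<open>\<nu> = \<alpha> - \<alpha>' + 1/2\<close>. A nonzero polynomial solution cannot vanish anywhere on
  \<open>r - 2c\<nat>\<^sub>+\<close>, so a solution is fixed by its value at \<open>r - 2c\<close>. Unless \<open>\<nu> \<in> {0, 1, 2}\<close>
  it vanishes at \<open>r, r + 2c, r + 4c\<close>, and three instances of the identity then give
  inconsistent equations for \<open>\<alpha>, \<alpha>'\<close>; for \<open>\<nu> = 2\<close> the first of them forces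
  \<open>\<alpha>' = -1/2\<close>. In the remaining cases the listed polynomials are solutions.\<close>

lemma melt_eqI:
  fixes u v :: melt
  assumes "\<And>z. poly (fst u) z = poly (fst v) z" and "\<And>z. poly (snd u) z = poly (snd v) z"
  shows "u = v"
proof -
  have "fst u = fst v" and "snd u = snd v"
    using assms poly_eq_poly_eq_iff by blast+
  then show ?thesis by (simp add: prod_eq_iff)
qed

lemma poly_fst_act:
  "poly (fst (act a b a' b' f g h x l e)) z =
     poly (x GL) (-l) * (poly (fst e) (l+z) * (a'*l+b'+z) + poly (snd e) (l+z) * poly (at_lam f l) z)
   + poly (x GY) (-l) * poly (snd e) (l+z) * poly (at_lam g l) z
   + poly (x GM) (-l) * poly (snd e) (l+z) * poly (at_lam h l) z"
  by (cases e) (simp add: act_def esum_def gens_def eadd_def escal_def ezero_def poly_pcompose algebra_simps)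

lemma poly_snd_act:
  "poly (snd (act a b a' b' f g h x l e)) z = poly (x GL) (-l) * poly (snd e) (l+z) * (a*l+b+z)"
  by (cases e) (simp add: act_def esum_def gens_def eadd_def escal_def ezero_def poly_pcompose algebra_simps)

lemma poly_rbr_GL: "poly (rbr c x y l GL) w = poly (x GL) (-l) * poly (y GL) (l+w) * (2*l + w)"
  by (simp add: rbr_def rsum_def gens_def radd_def rscal_def rzero_def rgen_def poly_pcompose algebra_simps)

lemma poly_rbr_GY: "poly (rbr c x y l GY) w = poly (x GL) (-l) * poly (y GY) (l+w) * (3/2*l + c + w)
   + poly (x GY) (-l) * poly (y GL) (l+w) * (3/2*l - c + w/2)"
  by (simp add: rbr_def rsum_def gens_def radd_def rscal_def rzero_def rgen_def poly_pcompose algebra_simps)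

lemma poly_rbr_GM: "poly (rbr c x y l GM) w = poly (x GL) (-l) * poly (y GM) (l+w) * (2*c + w)
   + poly (x GM) (-l) * poly (y GL) (l+w) * (-2*c - w)
   + poly (x GY) (-l) * poly (y GY) (l+w) * ((2*l + w) * (-2*c - w))"
  by (simp add: rbr_def rsum_def gens_def radd_def rscal_def rzero_def rgen_def poly_pcompose algebra_simps)

lemmas poly_act_rbr = poly_fst_act poly_snd_act poly_rbr_GL poly_rbr_GY poly_rbr_GM

lemma poly2_eq_0I:
  fixes F :: poly2
  assumes "infinite S" and "\<And>l x. l \<in> S \<Longrightarrow> poly (at_lam F l) x = 0"
  shows "F = 0"
proof (rule ccontr)
  assume "F \<noteq> 0"
  then have "finite {p. poly F p = 0}" by (rule poly_roots_finite)
  moreover have "(\<lambda>l. [:l:]) ` S \<subseteq> {p. poly F p = 0}"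
    using assms(2) poly_all_0_iff_0 unfolding at_lam_def by blast
  moreover have "infinite ((\<lambda>l. [:l:]) ` S)"
    using assms(1) by (simp add: finite_image_iff inj_on_def)
  ultimately show False using finite_subset by blast
qed

lemma at_lam_0 [simp]: "at_lam 0 l = 0"
  by (simp add: at_lam_def)

lemma at_lam_diff: "at_lam (F - G) l = at_lam F l - at_lam G l"
  by (simp add: at_lam_def)

text \<open>The Jacobi identity for \<open>L\<^sub>\<lambda>\<close> and \<open>Y\<^sub>\<mu>\<close> applied to \<open>v\<close>,
  in the variables \<open>x = \<partial>\<close>, \<open>l = \<lambda>\<close>, \<open>m = \<mu>\<close>.\<close>
definition jacobi_LY :: "complex \<Rightarrow> complex \<Rightarrow> complex \<Rightarrow> complex \<Rightarrow> complex \<Rightarrow> poly2 \<Rightarrow> bool" where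
  "jacobi_LY c a b a' b' g \<longleftrightarrow> (\<forall>x l m.
     (x + a'*l + b') * poly (at_lam g m) (x+l) - (x + m + a*l + b) * poly (at_lam g m) x
       = (l/2 - m + c) * poly (at_lam g (l+m)) x)"

lemma jacobi_LYD:
  "jacobi_LY c a b a' b' g \<Longrightarrow>
     (x + a'*l + b') * poly (at_lam g m) (x+l) - (x + m + a*l + b) * poly (at_lam g m) x
       = (l/2 - m + c) * poly (at_lam g (l+m)) x"
  unfolding jacobi_LY_def by blast

lemma is_module_jacobi:
  "is_module c a b a' b' f g h \<Longrightarrow>
     esub (act a b a' b' f g h x l (act a b a' b' f g h y m e)) (act a b a' b' f g h y m (act a b a' b' f g h x l e))
       = act a b a' b' f g h (rbr c x y l) (l+m) e"
  unfolding is_module_def by blast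

lemma is_module_jacobi_fst:
  assumes "is_module c a b a' b' f g h"
  shows "poly (fst (act a b a' b' f g h x l (act a b a' b' f g h y m e))) z
           - poly (fst (act a b a' b' f g h y m (act a b a' b' f g h x l e))) z
         = poly (fst (act a b a' b' f g h (rbr c x y l) (l+m) e)) z"
  using is_module_jacobi[OF assms, of x l y m e] by (metis esub_def fst_conv poly_diff)

lemma is_module_jacobi_LY:
  assumes "is_module c a b a' b' f g h"
  shows "jacobi_LY c a b a' b' g"
  unfolding jacobi_LY_def
proof (intro allI)
  fix x l m
  show "(x + a'*l + b') * poly (at_lam g m) (x+l) - (x + m + a*l + b) * poly (at_lam g m) x
          = (l/2 - m + c) * poly (at_lam g (l+m)) x"
    using is_module_jacobi_fst[OF assms, where x="rgen 1 GL" and y="rgen 1 GY" and l=l and m=m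
        and e="(0,1)" and z=x]
    by (simp add: poly_act_rbr rgen_def algebra_simps)
qed

lemma is_module_jacobi_LM:
  assumes "is_module c a b a' b' f g h"
  shows "(x + a'*l + b') * poly (at_lam h m) (x+l) - (x + m + a*l + b) * poly (at_lam h m) x
           = (2*c - l - m) * poly (at_lam h (l+m)) x"
  using is_module_jacobi_fst[OF assms, where x="rgen 1 GL" and y="rgen 1 GM" and l=l and m=m
      and e="(0,1)" and z=x]
  by (simp add: poly_act_rbr rgen_def algebra_simps)

lemma is_module_jacobi_LL:
  assumes "is_module c a b a' b' f g h"
  shows "(b - b') * poly (at_lam f l) x
           = (x + a*l + b) * poly (at_lam f 0) x - (x + a'*l + b') * poly (at_lam f 0) (x+l)"
  using is_module_jacobi_fst[OF assms, where x="rgen 1 GL" and y="rgen 1 GL" and l=l and m=0 and e="(0,1)" and z=x]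
  by (simp add: poly_act_rbr rgen_def algebra_simps)

text \<open>Bilinearity reduces the Jacobi identity for arbitrary \<open>x, y\<close> acting on \<open>v\<close> to the
  two instances \<open>(L, Y)\<close> and \<open>(Y, L)\<close> of \<open>jacobi_LY\<close>.\<close>
lemma jacobi_fst_from_LY:
  fixes xL yL xY yY Pf Qs Gm1 Gm0 Gl1 Gl0 Glm :: complex
  assumes LY: "(z + a'*l + b') * Gm1 - (z + m + a*l + b) * Gm0 = (l/2 - m + c) * Glm"
      and YL: "(z + a'*m + b') * Gl1 - (z + l + a*m + b) * Gl0 = (m/2 - l + c) * Glm"
  shows "xL * ((yL * (Pf * (a' * m + b' + (l + z))) + yY * Qs * Gm1) * (a' * l + b' + z)) +
     xY * (yL * Qs * (a * m + b + (l + z))) * Gl0 -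
     (yL * ((xL * (Pf * (a' * l + b' + (m + z))) + xY * Qs * Gl1) * (a' * m + b' + z)) +
      yY * (xL * Qs * (a * l + b + (m + z))) * Gm0) =
     xL * yL * (l - m) * (Pf * (a' * (l + m) + b' + z)) +
     (xL * yY * (l / 2 + (c - m)) + xY * yL * (3 * l / 2 - c + (- l - m) / 2)) * Qs * Glm"
  using LY YL by algebra

lemma is_module_f0_h0_if_jacobi_LY:
  assumes LY: "jacobi_LY c a b a' b' g"
  shows "is_module c a b a' b' 0 g 0"
  unfolding is_module_def
proof (intro conjI allI)
  fix x l e
  show "act a b a' b' 0 g 0 (dR x) l e = escal [:- l:] (act a b a' b' 0 g 0 x l e)"
    by (rule melt_eqI) (simp_all add: poly_act_rbr dR_def rscal_def escal_def algebra_simps)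
  show "act a b a' b' 0 g 0 x l (dE e) = escal [:l, 1:] (act a b a' b' 0 g 0 x l e)"
    by (rule melt_eqI) (simp_all add: poly_act_rbr dE_def escal_def algebra_simps)
next
  fix x y e l m
  let ?act = "act a b a' b' 0 g 0"
  show "esub (?act x l (?act y m e)) (?act y m (?act x l e)) = ?act (rbr c x y l) (l + m) e"
  proof (rule melt_eqI)
    fix z
    show "poly (snd (esub (?act x l (?act y m e)) (?act y m (?act x l e)))) z =
          poly (snd (?act (rbr c x y l) (l + m) e)) z"
      by (simp add: esub_def poly_act_rbr algebra_simps)
    have shifts: "poly p (m + (l + z)) = poly p (l + m + z)" "poly p (l + (m + z)) = poly p (l + m + z)"
      "poly (at_lam g m) (l + z) = poly (at_lam g m) (z + l)"
      "poly (at_lam g l) (m + z) = poly (at_lam g l) (z + m)" for p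
      by (simp_all add: add_ac)
    show "poly (fst (esub (?act x l (?act y m e)) (?act y m (?act x l e)))) z =
          poly (fst (?act (rbr c x y l) (l + m) e)) z"
      apply (simp add: esub_def poly_act_rbr)
      apply (simp only: shifts)
      using jacobi_LYD[OF LY, of z l m] jacobi_LYD[OF LY, of z m l]
      by (intro jacobi_fst_from_LY) (simp_all add: add.commute)
  qed
qed

lemma is_module_f0_h0_iff:
  "is_module c a b a' b' 0 g 0 \<longleftrightarrow> jacobi_LY c a b a' b' g"
  using is_module_jacobi_LY is_module_f0_h0_if_jacobi_LY by blast

lemma is_module_h_eq_0:
  assumes "is_module c a b a' b' f g h" and "b - b' + c = 0" and "b \<noteq> b'"
  shows "h = 0"
proof (rule poly2_eq_0I[OF infinite_UNIV_char_0])
  fix m x :: complex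
  have "(b' - b - 2*c) * poly (at_lam h m) x = 0"
    using is_module_jacobi_LM[OF assms(1), of x 0 m] by (simp add: algebra_simps)
  moreover have "b' - b - 2*c = - c"
    using assms(2) by (simp add: algebra_simps)
  ultimately have "c * poly (at_lam h m) x = 0"
    by simp
  moreover have "c \<noteq> 0" using assms(2,3) by auto
  ultimately show "poly (at_lam h m) x = 0" by simp
qed

lemma additive_scalar_map_form:
  fixes \<phi> :: "melt \<Rightarrow> melt"
  assumes add: "\<And>x y. \<phi> (eadd x y) = eadd (\<phi> x) (\<phi> y)"
    and scal: "\<And>r x. \<phi> (escal r x) = escal r (\<phi> x)"
    and fix_sub: "\<And>p. \<phi> (p, 0) = (p, 0)"
    and fix_quot: "\<And>x. snd (\<phi> x) = snd x"
  shows "\<phi> u = (fst u + snd u * fst (\<phi> (0, 1)), snd u)"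
proof -
  have "u = eadd (fst u, 0) (escal (snd u) (0, 1))"
    by (simp add: eadd_def escal_def)
  then have "\<phi> u = eadd (fst u, 0) (escal (snd u) (\<phi> (0, 1)))"
    using add scal fix_sub by metis
  moreover have "\<phi> (0, 1) = (fst (\<phi> (0, 1)), 1)"
    using fix_quot[of "(0, 1)"] by (metis prod.collapse snd_conv)
  ultimately show ?thesis
    by (metis (no_types, lifting) eadd_def escal_def fst_conv mult.commute add_0 mult_1_right snd_conv)
qed

text \<open>Replacing the lift \<open>v\<close> by \<open>v + s(\<partial>) vbar\<close> changes \<open>f\<close> by the coboundary of \<open>s\<close>;
  since \<open>\<beta> \<noteq> \<beta>'\<close>, the \<open>[L\<^sub>\<lambda> L]\<close> identity shows that \<open>f\<close> is such a coboundary.\<close>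
lemma ext_equiv_f_0:
  assumes "is_module c a b a' b' f g h" and "b \<noteq> b'"
  shows "ext_equiv c a b a' b' (f, g, h) (0, g, h)"
proof -
  define s where "s = smult (-1/(b-b')) (at_lam f 0)"
  have coboundary: "poly (at_lam f l) x = poly s (l+x) * (a'*l + b' + x) - (a*l + b + x) * poly s x"
    for l x
  proof -
    have "(b - b') * poly (at_lam f l) x
            = (x + a*l + b) * poly (at_lam f 0) x - (x + a'*l + b') * poly (at_lam f 0) (x+l)"
      by (rule is_module_jacobi_LL[OF assms(1)])
    then have "poly (at_lam f l) x = ((x + a*l + b) * poly (at_lam f 0) x
                 - (x + a'*l + b') * poly (at_lam f 0) (x+l)) / (b - b')"
      using assms(2) by (simp add: eq_divide_eq mult.commute)
    with assms(2) show ?thesis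
      by (simp add: s_def divide_inverse algebra_simps)
  qed
  show ?thesis
    unfolding ext_equiv_def prod.case
  proof (intro exI[of _ "\<lambda>u. (fst u + snd u * s, snd u)"] conjI allI)
    fix x l e
    show "(\<lambda>u. (fst u + snd u * s, snd u)) (act a b a' b' f g h x l e) =
          act a b a' b' 0 g h x l ((\<lambda>u. (fst u + snd u * s, snd u)) e)"
      by (rule melt_eqI) (simp_all add: poly_act_rbr coboundary algebra_simps)
  qed (simp_all add: eadd_def escal_def algebra_simps)
qed

lemma ext_equiv_trivial_iff:
  assumes "b \<noteq> b'"
  shows "ext_equiv c a b a' b' (0, g, 0) (0, 0, 0) \<longleftrightarrow> g = 0"
proof
  assume "g = 0"
  then show "ext_equiv c a b a' b' (0, g, 0) (0, 0, 0)"
    unfolding ext_equiv_def by (auto intro: exI[of _ id])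
next
  assume "ext_equiv c a b a' b' (0, g, 0) (0, 0, 0)"
  then obtain \<phi> where add: "\<And>x y. \<phi> (eadd x y) = eadd (\<phi> x) (\<phi> y)"
    and scal: "\<And>r x. \<phi> (escal r x) = escal r (\<phi> x)"
    and fix_sub: "\<And>p. \<phi> (p, 0) = (p, 0)" and fix_quot: "\<And>x. snd (\<phi> x) = snd x"
    and intertwines: "\<And>x l e. \<phi> (act a b a' b' 0 g 0 x l e) = act a b a' b' 0 0 0 x l (\<phi> e)"
    unfolding ext_equiv_def prod.case by blast
  define s where "s = fst (\<phi> (0, 1))"
  have \<phi>: "\<phi> u = (fst u + snd u * s, snd u)" for u
    unfolding s_def by (rule additive_scalar_map_form[OF add scal fix_sub fix_quot])
  have "(b - b') * poly s z = 0" for z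
    using arg_cong[OF intertwines[of "rgen 1 GL" 0 "(0, 1)"], of "\<lambda>u. poly (fst u) z"]
    by (simp add: \<phi> poly_act_rbr rgen_def algebra_simps)
  with assms have "s = 0"
    using poly_all_0_iff_0 by auto
  show "g = 0"
  proof (rule poly2_eq_0I[OF infinite_UNIV_char_0])
    fix l z
    show "poly (at_lam g l) z = 0"
      using arg_cong[OF intertwines[of "rgen 1 GY" l "(0, 1)"], of "\<lambda>u. poly (fst u) z"] \<open>s = 0\<close>
      by (simp add: \<phi> poly_act_rbr rgen_def)
  qed
qed

lemma poly_shift_eq_0:
  fixes p :: "'a::field_char_0 poly"
  assumes "u \<noteq> 0"
    and shift: "\<And>x. (x - r) * poly p (x - u) = (x - s) * poly p x"
    and "poly p (r - of_nat (Suc n) * u) = 0"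
  shows "p = 0"
proof (rule ccontr)
  have zeros: "poly p (r - of_nat (Suc n + k) * u) = 0" for k
  proof (induction k)
    case 0
    with assms(3) show ?case by simp
  next
    case (Suc k)
    let ?x = "r - of_nat (Suc n + k) * u"
    have "(?x - r) * poly p (?x - u) = 0"
      using shift[of ?x] Suc.IH by simp
    moreover have "?x - r \<noteq> 0"
      using \<open>u \<noteq> 0\<close> by (simp del: of_nat_Suc)
    ultimately have "poly p (?x - u) = 0"
      by simp
    moreover have "?x - u = r - of_nat (Suc n + Suc k) * u"
      by (simp add: algebra_simps)
    ultimately show ?case by metis
  qed
  assume "p \<noteq> 0"
  then have "finite {x. poly p x = 0}"
    by (rule poly_roots_finite)
  moreover have "inj (\<lambda>k. r - of_nat (Suc n + k) * u)"
    using \<open>u \<noteq> 0\<close> by (auto intro!: injI simp del: of_nat_Suc)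
  then have "infinite (range (\<lambda>k. r - of_nat (Suc n + k) * u))"
    by (rule range_inj_infinite)
  moreover have "range (\<lambda>k. r - of_nat (Suc n + k) * u) \<subseteq> {x. poly p x = 0}"
    using zeros by auto
  ultimately show False
    using finite_subset by blast
qed

lemma poly_shift_zeros:
  fixes p :: "'a::field_char_0 poly"
  assumes "u \<noteq> 0"
    and shift: "\<And>x. (x - r) * poly p (x - u) = (x - r - v * u) * poly p x"
    and "\<forall>j\<le>k. v \<noteq> of_nat j"
  shows "poly p (r + of_nat k * u) = 0"
  using assms(3)
proof (induction k)
  case 0
  then have "v * u \<noteq> 0"
    using \<open>u \<noteq> 0\<close> by auto
  with shift[of r] show ?case
    by simp
next
  case (Suc k)
  have "(of_nat (Suc k) - v) * u * poly p (r + of_nat (Suc k) * u)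
          = of_nat (Suc k) * u * poly p (r + of_nat k * u)"
    using shift[of "r + of_nat (Suc k) * u"] by (simp add: algebra_simps)
  also have "\<dots> = 0"
    using Suc by simp
  finally have "(of_nat (Suc k) - v) * u * poly p (r + of_nat (Suc k) * u) = 0" .
  moreover have "v \<noteq> of_nat (Suc k)"
    using Suc.prems by blast
  ultimately show ?case
    using \<open>u \<noteq> 0\<close> by (simp del: of_nat_Suc)
qed

lemma jacobi_LY_at_0:
  assumes "jacobi_LY c a b a' b' g"
  shows "(l/2 + c) * poly (at_lam g l) x
           = (x + a'*l + b') * poly (at_lam g 0) (x+l) - (x + a*l + b) * poly (at_lam g 0) x"
  using jacobi_LYD[OF assms, of x l 0] by (simp add: algebra_simps)

text \<open>At \<open>\<lambda> = -2c\<close> the left-hand side of the previous identity vanishes, leaving a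
  first-order difference equation for \<open>g(\<partial>, 0)\<close>.\<close>
lemma jacobi_LY_shift:
  assumes "jacobi_LY c a b a' b' g"
  shows "(x - (2*c*a' - b')) * poly (at_lam g 0) (x - 2*c)
           = (x - (2*c*a - b)) * poly (at_lam g 0) x"
  using jacobi_LY_at_0[OF assms, of "-2*c" x] by (simp add: algebra_simps)

lemma jacobi_LY_eq_0:
  assumes "jacobi_LY c a b a' b' g" and "at_lam g 0 = 0"
  shows "g = 0"
proof (rule poly2_eq_0I)
  show "infinite (UNIV - {-2*c})"
    by (simp add: infinite_UNIV_char_0)
  fix l x assume "l \<in> UNIV - {-2*c}"
  then have "l/2 + c \<noteq> 0"
    by (auto simp: field_simps eq_neg_iff_add_eq_0)
  moreover have "(l/2 + c) * poly (at_lam g l) x = 0"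
    using jacobi_LY_at_0[OF assms(1), of l x] assms(2) by simp
  ultimately show "poly (at_lam g l) x = 0" by simp
qed

lemma jacobi_LY_at_0_nonzero:
  assumes "jacobi_LY c a b a' b' g" and "g \<noteq> 0" and "c \<noteq> 0"
  shows "poly (at_lam g 0) (2*c*a' - b' - of_nat (Suc n) * (2*c)) \<noteq> 0"
proof
  assume "poly (at_lam g 0) (2*c*a' - b' - of_nat (Suc n) * (2*c)) = 0"
  with assms(3) have "at_lam g 0 = 0"
    by (intro poly_shift_eq_0[OF _ jacobi_LY_shift[OF assms(1)]]) simp_all
  with jacobi_LY_eq_0[OF assms(1)] assms(2) show False
    by blast
qed

lemma jacobi_LY_diff:
  assumes "jacobi_LY c a b a' b' g" and "jacobi_LY c a b a' b' g'"
  shows "jacobi_LY c a b a' b' (g - g')"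
  unfolding jacobi_LY_def at_lam_diff poly_diff
proof (intro allI)
  fix x l m
  show "(x + a'*l + b') * (poly (at_lam g m) (x+l) - poly (at_lam g' m) (x+l))
          - (x + m + a*l + b) * (poly (at_lam g m) x - poly (at_lam g' m) x)
        = (l/2 - m + c) * (poly (at_lam g (l+m)) x - poly (at_lam g' (l+m)) x)"
    using jacobi_LYD[OF assms(1), of x l m] jacobi_LYD[OF assms(2), of x l m]
    by algebra
qed

lemma jacobi_LY_eqI:
  assumes "jacobi_LY c a b a' b' g" and "jacobi_LY c a b a' b' g'" and "c \<noteq> 0"
    and "poly (at_lam g 0) (2*c*a' - b' - 2*c) = poly (at_lam g' 0) (2*c*a' - b' - 2*c)"
  shows "g = g'"
proof (rule ccontr)
  assume "g \<noteq> g'"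
  then have "poly (at_lam (g - g') 0) (2*c*a' - b' - of_nat (Suc 0) * (2*c)) \<noteq> 0"
    using jacobi_LY_at_0_nonzero[OF jacobi_LY_diff[OF assms(1,2)] _ assms(3), of 0] by simp
  with assms(4) show False
    by (simp add: at_lam_diff)
qed

lemma jacobi_LY_constraint_A:
  fixes c a b a' b' r :: complex and g :: poly2
  defines "r \<equiv> 2*c*a' - b'"
  assumes LY: "jacobi_LY c a b a' b' g" and "b - b' + c = 0" and "c \<noteq> 0"
    and "poly (at_lam g 0) r = 0" and "poly (at_lam g 0) (r + 2*c) = 0"
  shows "(2*a' + 2*a - 1) * (2*a' + 2*a - 3) * poly (at_lam g 0) (r - 2*c) = 0"
proof -
  define G where "G l = poly (at_lam g l)" for l
  note R = jacobi_LY_at_0[OF LY, folded G_def] and J = jacobi_LYD[OF LY, folded G_def]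
  have G0: "G 0 r = 0" "G 0 (r + 2*c) = 0"
    using assms(5,6) by (simp_all add: G_def)
  have "G (2*c) r = 0"
    using R[of "2*c" r] G0 \<open>c \<noteq> 0\<close> by simp
  then have "(r + a*(2*c) + b) * G (2*c) (r - 2*c) = 0"
    using J[of "r - 2*c" "2*c" "2*c"] by simp
  then have "0 = (r + a*(2*c) + b) * (2*c * G (2*c) (r - 2*c))"
    by auto
  also have "2*c * G (2*c) (r - 2*c) = - ((r - 2*c + a*(2*c) + b) * G 0 (r - 2*c))"
    using R[of "2*c" "r - 2*c"] G0 by simp
  finally have "(r + a*(2*c) + b) * (r - 2*c + a*(2*c) + b) * G 0 (r - 2*c) = 0"
    by simp
  moreover have "r + a*(2*c) + b = c * (2*a' + 2*a - 1)" "r - 2*c + a*(2*c) + b = c * (2*a' + 2*a - 3)"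
    using assms(3) by (simp_all add: r_def algebra_simps)
  ultimately show ?thesis
    using \<open>c \<noteq> 0\<close> by (simp add: G_def)
qed

lemma jacobi_LY_constraint_B:
  fixes c a b a' b' r :: complex and g :: poly2
  defines "r \<equiv> 2*c*a' - b'"
  assumes LY: "jacobi_LY c a b a' b' g" and "b - b' + c = 0" and "c \<noteq> 0" and "a' \<noteq> 0"
    and "poly (at_lam g 0) r = 0" and "poly (at_lam g 0) (r + 4*c) = 0"
  shows "(2*a' + 4*a - 5) * poly (at_lam g 0) (r - 4*c) = 0"
proof -
  define G where "G l = poly (at_lam g l)" for l
  note R = jacobi_LY_at_0[OF LY, folded G_def] and J = jacobi_LYD[OF LY, folded G_def]
  have G0: "G 0 r = 0" "G 0 (r + 4*c) = 0"
    using assms(6,7) by (simp_all add: G_def)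
  have "G (4*c) r = 0"
    using R[of "4*c" r] G0 \<open>c \<noteq> 0\<close> by simp
  then have "(r - 4*c*a' + b') * G (4*c) (r - 4*c) = 0"
    using J[of r "-4*c" "4*c"] G0 by (simp add: algebra_simps)
  then have "0 = (r - 4*c*a' + b') * (3*c * G (4*c) (r - 4*c))"
    by auto
  also have "3*c * G (4*c) (r - 4*c) = - ((r - 4*c + a*(4*c) + b) * G 0 (r - 4*c))"
    using R[of "4*c" "r - 4*c"] G0 by simp
  finally have "(r - 4*c*a' + b') * (r - 4*c + a*(4*c) + b) * G 0 (r - 4*c) = 0"
    by simp
  moreover have "r - 4*c*a' + b' = - 2*c*a'" "r - 4*c + a*(4*c) + b = c * (2*a' + 4*a - 5)"
    using assms(3) by (simp_all add: r_def algebra_simps)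
  ultimately show ?thesis
    using \<open>c \<noteq> 0\<close> \<open>a' \<noteq> 0\<close> by (simp add: G_def)
qed

lemma jacobi_LY_constraint_C:
  fixes c a b a' b' r :: complex and g :: poly2
  defines "r \<equiv> 2*c*a' - b'"
  assumes LY: "jacobi_LY c a b a' b' g" and "c \<noteq> 0"
    and "poly (at_lam g 0) r = 0" and "poly (at_lam g 0) (r + 4*c) = 0"
  shows "(2*a'^2 - a' - 2) * poly (at_lam g 0) (r - 4*c) = 0"
proof -
  define G where "G l = poly (at_lam g l)" for l
  note R = jacobi_LY_at_0[OF LY, folded G_def] and J = jacobi_LYD[OF LY, folded G_def]
  have G0: "G 0 r = 0" "G 0 (r + 4*c) = 0"
    using assms(4,5) by (simp_all add: G_def)
  have "G (-4*c) (r + 4*c) = 0"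
    using R[of "-4*c" "r + 4*c"] G0 \<open>c \<noteq> 0\<close> by simp
  then have "c * (4 - 2*a') * G (-4*c) r = 3*c * G (-8*c) (r + 4*c)"
    using J[of "r + 4*c" "-4*c" "-4*c"] by (simp add: r_def algebra_simps)
  moreover have "c * G (-4*c) r = 2*c*a' * G 0 (r - 4*c)"
    using R[of "-4*c" r] G0 by (auto simp: r_def algebra_simps)
  moreover have "3*c * G (-8*c) (r + 4*c) = c * (6*a' - 4) * G 0 (r - 4*c)"
    using R[of "-8*c" "r + 4*c"] G0 by (simp add: r_def algebra_simps)
  ultimately have "c * (2*a'^2 - a' - 2) * G 0 (r - 4*c) = 0"
    by algebra
  then show ?thesis
    using \<open>c \<noteq> 0\<close> by (simp add: G_def)
qed

lemma weight_constraints_solution: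
  fixes a a' :: complex
  assumes A: "(2*a' + 2*a - 1) * (2*a' + 2*a - 3) = 0" and B: "2*a' + 4*a - 5 = 0"
    and C: "2*a'^2 - a' - 2 = 0"
  shows "a - a' = 1/2"
proof -
  have a: "a = (5 - 2*a')/4"
    using B by (simp add: field_simps)
  have "(a' + 3/2) * (a' - 1/2) = 0"
    using A B by algebra
  moreover have "a' \<noteq> -3/2"
    using C by (auto simp: power2_eq_square)
  ultimately have "a' = 1/2"
    by (simp add: eq_neg_iff_add_eq_0)
  with a show ?thesis
    by simp
qed

lemma jacobi_LY_at_0_zeros:
  assumes LY: "jacobi_LY c a b a' b' g" and "c \<noteq> 0" and "b - b' + c = 0"
    and "\<forall>j\<le>k. a - a' + 1/2 \<noteq> of_nat j"
  shows "poly (at_lam g 0) (2*c*a' - b' + of_nat k * (2*c)) = 0"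
proof (rule poly_shift_zeros[OF _ _ assms(4)])
  show "2*c \<noteq> 0"
    using \<open>c \<noteq> 0\<close> by simp
  have b': "b' = b + c"
    using assms(3) by (simp add: algebra_simps)
  show "(x - (2*c*a' - b')) * poly (at_lam g 0) (x - 2*c)
          = (x - (2*c*a' - b') - (a - a' + 1/2) * (2*c)) * poly (at_lam g 0) x" for x
    using jacobi_LY_shift[OF LY, of x] by (simp add: b' algebra_simps)
qed

lemma jacobi_LY_weights:
  assumes LY: "jacobi_LY c a b a' b' g" and "g \<noteq> 0" and "a' \<noteq> 0" and "c \<noteq> 0"
    and "b - b' + c = 0"
  shows "a - a' = -1/2 \<or> a - a' = 1/2 \<or> (a = 1 \<and> a' = -1/2)"
proof -
  define r where "r = 2*c*a' - b'"
  define G0 where "G0 = poly (at_lam g 0)"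
  define v where "v = a - a' + 1/2"
  have nonzero: "G0 (r - 2*c) \<noteq> 0" "G0 (r - 4*c) \<noteq> 0"
    using jacobi_LY_at_0_nonzero[OF LY assms(2,4), of 0] jacobi_LY_at_0_nonzero[OF LY assms(2,4), of 1]
    by (simp_all add: r_def G0_def)
  note zero = jacobi_LY_at_0_zeros[OF LY assms(4,5), folded r_def G0_def v_def]
  have zero_0: "G0 r = 0" if "v \<noteq> 0"
    using zero[of 0] that by simp
  have zero_2: "G0 (r + 2*c) = 0" if "v \<noteq> 0" "v \<noteq> 1"
    using zero[of 1] that by (simp add: le_Suc_eq)
  have zero_4: "G0 (r + 4*c) = 0" if "v \<noteq> 0" "v \<noteq> 1" "v \<noteq> 2"
    using zero[of 2] that by (simp add: le_Suc_eq numeral_2_eq_2)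
  have A: "(2*a' + 2*a - 1) * (2*a' + 2*a - 3) = 0" if "v \<noteq> 0" "v \<noteq> 1"
    using jacobi_LY_constraint_A[OF LY assms(5,4)] zero_0 zero_2 nonzero that
    by (simp add: r_def G0_def)
  consider "v = 0" | "v = 1" | "v = 2" | "v \<noteq> 0" "v \<noteq> 1" "v \<noteq> 2"
    by blast
  then show ?thesis
  proof cases
    case 1
    then show ?thesis by (simp add: v_def field_simps)
  next
    case 2
    then show ?thesis by (simp add: v_def field_simps)
  next
    case 3
    then have a: "a = a' + 3/2"
      by (simp add: v_def field_simps)
    with A 3 have "(4*a' + 2) * (4*a') = 0"
      by (simp add: algebra_simps)
    with \<open>a' \<noteq> 0\<close> have "4*a' + 2 = 0"
      by simp
    then have "a' = -1/2"
      by algebra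
    with a show ?thesis
      by simp
  next
    case 4
    have "2*a' + 4*a - 5 = 0"
      using jacobi_LY_constraint_B[OF LY assms(5,4,3)] zero_0 zero_4 nonzero 4
      by (simp add: r_def G0_def)
    moreover have "2*a'^2 - a' - 2 = 0"
      using jacobi_LY_constraint_C[OF LY assms(4)] zero_0 zero_4 nonzero 4
      by (simp add: r_def G0_def)
    ultimately show ?thesis
      using weight_constraints_solution A 4 by blast
  qed
qed

lemma at_lam_add [simp]: "at_lam (F + G) l = at_lam F l + at_lam G l"
  by (simp add: at_lam_def)

lemma at_lam_mult [simp]: "at_lam (F * G) l = at_lam F l * at_lam G l"
  by (simp add: at_lam_def)

lemma at_lam_power [simp]: "at_lam (F ^ n) l = at_lam F l ^ n"
  by (simp add: at_lam_def poly_power)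

lemma poly_at_lam_Cst [simp]: "poly (at_lam (Cst k) l) x = k"
  by (simp add: at_lam_def Cst_def)

lemma poly_at_lam_Dv [simp]: "poly (at_lam Dv l) x = x"
  by (simp add: at_lam_def Dv_def)

lemma poly_at_lam_Lv [simp]: "poly (at_lam Lv l) x = l"
  by (simp add: at_lam_def Lv_def)

lemma jacobi_LY_constant:
  assumes "a - a' = -1/2" and "b - b' + c = 0"
  shows "jacobi_LY c a b a' b' (Cst k)"
proof -
  have a: "a = -1/2 + a'"
    using assms(1) by (metis diff_add_cancel)
  have b: "b = b' - c"
    using assms(2) by (simp add: algebra_simps)
  show ?thesis
    unfolding jacobi_LY_def a b by (simp add: algebra_simps)
qed

lemma jacobi_LY_linear:
  assumes "a - a' = 1/2" and "b - b' + c = 0"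
  shows "jacobi_LY c a b a' b' (Cst k * (Dv + Cst (2*a') * Lv + Cst (-2*a'*c + b')))"
proof -
  have a: "a = 1/2 + a'"
    using assms(1) by (metis diff_add_cancel)
  have b: "b = b' - c"
    using assms(2) by (simp add: algebra_simps)
  show ?thesis
    unfolding jacobi_LY_def a b by (simp add: algebra_simps)
qed

lemma jacobi_LY_quadratic:
  assumes "a = 1" and "a' = -1/2" and "b - b' + c = 0"
  shows "jacobi_LY c a b a' b' (Cst k * (Dv^2 + Cst (2*(1 + 2*a')) * Dv * Lv + Cst (2*a') * Lv^2
                       + Cst (2*b' - 2*(1 + 2*a')*c) * Dv
                       + Cst (-4*c*a' + 2*(1 + 2*a')*b') * Lv
                       + Cst (b'^2 - 2*c*b'*(1 + 2*a') + 2*c^2*a')))"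
proof -
  have b: "b = b' - c"
    using assms by (simp add: algebra_simps)
  show ?thesis
    unfolding jacobi_LY_def assms(1,2) b by (simp add: algebra_simps power2_eq_square)
qed

lemma jacobi_LY_classification:
  assumes LY: "jacobi_LY c a b a' b' g" and "g \<noteq> 0" and "a' \<noteq> 0" and "c \<noteq> 0"
    and bb: "b - b' + c = 0"
  shows "\<exists>k. k \<noteq> 0 \<and>
           ((a - a' = -1/2 \<and> g = Cst k)
          \<or> (a - a' = 1/2 \<and> g = Cst k * (Dv + Cst (2*a') * Lv + Cst (-2*a'*c + b')))
          \<or> (a = 1 \<and> a' = -1/2 \<and>
              g = Cst k * (Dv^2 + Cst (2*(1 + 2*a')) * Dv * Lv + Cst (2*a') * Lv^2
                   + Cst (2*b' - 2*(1 + 2*a')*c) * Dv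
                   + Cst (-4*c*a' + 2*(1 + 2*a')*b') * Lv
                   + Cst (b'^2 - 2*c*b'*(1 + 2*a') + 2*c^2*a'))))"
proof -
  define q where "q = poly (at_lam g 0) (2*c*a' - b' - 2*c)"
  have "q \<noteq> 0"
    using jacobi_LY_at_0_nonzero[OF LY assms(2,4), of 0] by (simp add: q_def)
  note eqI = jacobi_LY_eqI[OF LY _ \<open>c \<noteq> 0\<close>, folded q_def]
  from jacobi_LY_weights[OF assms] consider
      "a - a' = -1/2" | "a - a' = 1/2" | "a = 1" "a' = -1/2"
    by blast
  then show ?thesis
  proof cases
    case 1
    have "g = Cst q"
      by (rule eqI[OF jacobi_LY_constant[OF 1 bb]]) simp
    with 1 \<open>q \<noteq> 0\<close> show ?thesis
      by blast
  next
    case 2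
    define k where "k = - q / (2*c)"
    have "g = Cst k * (Dv + Cst (2*a') * Lv + Cst (-2*a'*c + b'))"
      by (rule eqI[OF jacobi_LY_linear[OF 2 bb]]) (simp add: k_def \<open>c \<noteq> 0\<close>)
    moreover have "k \<noteq> 0"
      using \<open>q \<noteq> 0\<close> \<open>c \<noteq> 0\<close> by (simp add: k_def)
    ultimately show ?thesis
      using 2 by blast
  next
    case 3
    define k where "k = q / (8*c^2)"
    have "g = Cst k * (Dv^2 + Cst (2*(1 + 2*a')) * Dv * Lv + Cst (2*a') * Lv^2
                   + Cst (2*b' - 2*(1 + 2*a')*c) * Dv
                   + Cst (-4*c*a' + 2*(1 + 2*a')*b') * Lv
                   + Cst (b'^2 - 2*c*b'*(1 + 2*a') + 2*c^2*a'))"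
      by (rule eqI[OF jacobi_LY_quadratic[OF 3 bb]])
        (simp add: k_def 3 \<open>c \<noteq> 0\<close> field_simps power2_eq_square)
    moreover have "k \<noteq> 0"
      using \<open>q \<noteq> 0\<close> \<open>c \<noteq> 0\<close> by (simp add: k_def)
    ultimately show ?thesis
      using 3 by blast
  qed
qed

lemma jacobi_LY_iff:
  assumes "g \<noteq> 0" and "a' \<noteq> 0" and "c \<noteq> 0" and bb: "b - b' + c = 0"
  shows "jacobi_LY c a b a' b' g \<longleftrightarrow> (\<exists>k. k \<noteq> 0 \<and>
           ((a - a' = -1/2 \<and> g = Cst k)
          \<or> (a - a' = 1/2 \<and> g = Cst k * (Dv + Cst (2*a') * Lv + Cst (-2*a'*c + b')))
          \<or> (a = 1 \<and> a' = -1/2 \<and>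
              g = Cst k * (Dv^2 + Cst (2*(1 + 2*a')) * Dv * Lv + Cst (2*a') * Lv^2
                   + Cst (2*b' - 2*(1 + 2*a')*c) * Dv
                   + Cst (-4*c*a' + 2*(1 + 2*a')*b') * Lv
                   + Cst (b'^2 - 2*c*b'*(1 + 2*a') + 2*c^2*a')))))"
  using jacobi_LY_classification[OF _ assms] jacobi_LY_constant[OF _ bb] jacobi_LY_linear[OF _ bb]
    jacobi_LY_quadratic[OF _ _ bb]
  by blast

theorem theorem4p8:
  fixes c a b a' b' :: complex
  assumes "a \<noteq> 0" and "a' \<noteq> 0" and "b \<noteq> b'" and "b - b' + c = 0"
  shows "(\<forall>f g h. is_module c a b a' b' f g h \<longrightarrow> h = 0)
       \<and> (\<forall>f g h. is_module c a b a' b' f g h \<longrightarrow>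
            (\<exists>g' h'. is_module c a b a' b' 0 g' h' \<and> ext_equiv c a b a' b' (f, g, h) (0, g', h')))
       \<and> (\<forall>g. is_module c a b a' b' 0 g 0 \<longrightarrow>
            ((\<not> ext_equiv c a b a' b' (0, g, 0) (0, 0, 0)) \<longleftrightarrow> g \<noteq> 0))
       \<and> (\<forall>g. g \<noteq> 0 \<longrightarrow>
            (is_module c a b a' b' 0 g 0 \<longleftrightarrow>
             (\<exists>k. k \<noteq> 0 \<and>
               ((a - a' = -1/2 \<and> g = Cst k)
              \<or> (a - a' = 1/2 \<and> g = Cst k * (Dv + Cst (2*a') * Lv + Cst (-2*a'*c + b')))
              \<or> (a = 1 \<and> a' = -1/2 \<and>
                  g = Cst k * (Dv^2 + Cst (2*(1 + 2*a')) * Dv * Lv + Cst (2*a') * Lv^2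
                       + Cst (2*b' - 2*(1 + 2*a')*c) * Dv
                       + Cst (-4*c*a' + 2*(1 + 2*a')*b') * Lv
                       + Cst (b'^2 - 2*c*b'*(1 + 2*a') + 2*c^2*a')))))))"
proof -
  have "c \<noteq> 0"
    using assms(3,4) by auto
  have h_eq_0: "h = 0" if "is_module c a b a' b' f g h" for f g h
    using is_module_h_eq_0[OF that assms(4,3)] .
  have f_eq_0: "\<exists>g' h'. is_module c a b a' b' 0 g' h' \<and> ext_equiv c a b a' b' (f, g, h) (0, g', h')"
    if "is_module c a b a' b' f g h" for f g h
    using is_module_f0_h0_if_jacobi_LY[OF is_module_jacobi_LY[OF that]] h_eq_0[OF that]
      ext_equiv_f_0[OF that assms(3)] by blast
  show ?thesis
    using h_eq_0 f_eq_0 ext_equiv_trivial_iff[OF assms(3)]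
      jacobi_LY_iff[OF _ assms(2) \<open>c \<noteq> 0\<close> assms(4)]
    by (simp add: is_module_f0_h0_iff)
qed

end
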